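(* Fix a $C^0$-concept over $\mathbb{K}$. Let $E,F\in\mathcal{M}$, $U\subseteq E$ open, $k\ge2$, $f\colon U\to F$ of class $C^k$, and let $f(x+th)=\sum_{j=0}^kt^ja_j(x,h)+t^kR_{k+1}(x,h,t)$ ($(x,h,t)\in U^{[1]}$) be the unique expansion with $a_j\colon U\times E\to F$ of class $C^{k-j}$ and $R_{k+1}\colon U^{[1]}\to F$ of class $C^0$ with $R_{k+1}(x,h,0)=0$. Then $a_0(x,h)=f(x)$ is constant in $h$, $a_1(x,h)=df(x)h$ is linear in $h$, and $a_2(x,\cdot)$ is an $F$-valued quadratic form with $$a_2(x,h_1+h_2)-a_2(x,h_1)-a_2(x,h_2)=d^2f(x)(h_1,h_2);$$ in particular $2a_2(x,h)=d^2f(x)(h,h)$.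
   Context: Let $\mathbb{K}$ be a commutative ring with unit carrying a topology. A $C^0$-concept over $\mathbb{K}$ consists of: (a) a class $\mathcal{M}$ of topologized $\mathbb{K}$-modules with $\mathbb{K}\in\mathcal{M}$; (b) for $E,F\in\mathcal{M}$ and open $U\subseteq E$, a set $C^0(U,F)$ of continuous maps; (c) for $E_1,E_2\in\mathcal{M}$ a topology on $E_1\times E_2$ (not necessarily the product topology) making it a member of $\mathcal{M}$; subject to: (I.1) composites of $C^0$-maps are $C^0$, identities and inclusions of open subsets are $C^0$; (I.2) $x\mapsto rx+b$ is $C^0$; (I.3) $t\mapsto tv+x$ is $C^0$; (I.4) $\mathbb{K}^\times$ is open and inversion is $C^0$; (I.5) $C^0$ is local on open covers; (II.1) projections and $v\mapsto(v,y)$, $w\mapsto(x,w)$ are $C^0$; (II.2) $f_1\times f_2$ is $C^0$ for $C^0$-maps $f_i$; (II.3) diagonals are $C^0$; (II.4) exchange/associativity maps of products are $C^0$ both ways; (II.5) addition and scalar multiplication are $C^0$; (III) a $C^0$-map on open $U\subseteq\mathbb{K}$ is determined by its values on $U\cap\mathbb{K}^\times$. For open $V\subseteq X$, $V^{[1]}=\{(x,v,t)\in V\times X\times\mathbb{K}:x+tv\in V\}$; a $C^0$-map $g$ is $C^1$ if there is a $C^0$-map $g^{[1]}$ on $V^{[1]}$ with $g(x+tv)-g(x)=t\,g^{[1]}(x,v,t)$, and $dg(x)v:=g^{[1]}(x,v,0)=:\partial_vg(x)$; recursively $g$ is $C^{k+1}$ if $C^k$ and $g^{[k]}$ is $C^1$,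 $g^{[k+1]}=(g^{[k]})^{[1]}$. For $f$ of class $C^2$, $d^2f(x)(v,w):=\partial_v\partial_wf(x)$. An $F$-valued quadratic form is a map $q\colon E\to F$ with $q(th)=t^2q(h)$ for all $t\in\mathbb{K}$ and $q(h_1+h_2)-q(h_1)-q(h_2)$ $\mathbb{K}$-bilinear in $(h_1,h_2)$. *)

theory Defs
  imports "HOL-Analysis.Analysis"
begin

datatype ('k, 'a) val = Sc (unSc: 'k) | At 'a | Pr (vfst: "('k, 'a) val") (vsnd: "('k, 'a) val")

record ('k, 'a) tmod =
  mcar   :: "('k, 'a) val set"
  mzero  :: "('k, 'a) val"
  madd   :: "('k, 'a) val \<Rightarrow> ('k, 'a) val \<Rightarrow> ('k, 'a) val"
  msmul  :: "'k \<Rightarrow> ('k, 'a) val \<Rightarrow> ('k, 'a) val"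
  mtop   :: "('k, 'a) val topology"

definition msub :: "('k::comm_ring_1, 'a) tmod \<Rightarrow> ('k, 'a) val \<Rightarrow> ('k, 'a) val \<Rightarrow> ('k, 'a) val" where
  "msub E x y = madd E x (msmul E (-1) y)"

definition is_tmod :: "('k::comm_ring_1, 'a) tmod \<Rightarrow> bool" where
  "is_tmod E \<longleftrightarrow>
     topspace (mtop E) = mcar E \<and>
     mzero E \<in> mcar E \<and>
     (\<forall>x\<in>mcar E. \<forall>y\<in>mcar E. madd E x y \<in> mcar E) \<and>
     (\<forall>r. \<forall>x\<in>mcar E. msmul E r x \<in> mcar E) \<and>
     (\<forall>x\<in>mcar E. \<forall>y\<in>mcar E. \<forall>z\<in>mcar E. madd E (madd E x y) z = madd E x (madd E y z)) \<and>
     (\<forall>x\<in>mcar E. \<forall>y\<in>mcar E. madd E x y = madd E y x) \<and>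
     (\<forall>x\<in>mcar E. madd E (mzero E) x = x) \<and>
     (\<forall>x\<in>mcar E. \<exists>y\<in>mcar E. madd E x y = mzero E) \<and>
     (\<forall>r. \<forall>x\<in>mcar E. \<forall>y\<in>mcar E. msmul E r (madd E x y) = madd E (msmul E r x) (msmul E r y)) \<and>
     (\<forall>r s. \<forall>x\<in>mcar E. msmul E (r + s) x = madd E (msmul E r x) (msmul E s x)) \<and>
     (\<forall>r s. \<forall>x\<in>mcar E. msmul E (r * s) x = msmul E r (msmul E s x)) \<and>
     (\<forall>x\<in>mcar E. msmul E 1 x = x)"

fun msumn :: "('k, 'a) tmod \<Rightarrow> nat \<Rightarrow> (nat \<Rightarrow> ('k, 'a) val) \<Rightarrow> ('k, 'a) val" where
  "msumn E 0 h = mzero E"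
| "msumn E (Suc n) h = madd E (msumn E n h) (h n)"

definition pset :: "('k, 'a) val set \<Rightarrow> ('k, 'a) val set \<Rightarrow> ('k, 'a) val set" where
  "pset A B = {Pr x y | x y. x \<in> A \<and> y \<in> B}"

text \<open>Data of a C^0-concept: the topology of K, the class M, the sets C^0(U,F)
  (as a predicate \<open>C0 E F U g\<close>: g \<in> C^0(U,F) for U open in E), and the
  topology chosen on products.\<close>
record ('k, 'a) c0concept =
  Ktop :: "'k topology"
  Mods :: "('k, 'a) tmod set"
  C0   :: "('k, 'a) tmod \<Rightarrow> ('k, 'a) tmod \<Rightarrow> ('k, 'a) val set \<Rightarrow> (('k, 'a) val \<Rightarrow> ('k, 'a) val) \<Rightarrow> bool"
  ptop :: "('k, 'a) tmod \<Rightarrow> ('k, 'a) tmod \<Rightarrow> ('k, 'a) val topology"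

definition Kmod :: "('k::comm_ring_1, 'a) c0concept \<Rightarrow> ('k, 'a) tmod" where
  "Kmod c = \<lparr> mcar = range Sc, mzero = Sc 0,
              madd = (\<lambda>x y. Sc (unSc x + unSc y)),
              msmul = (\<lambda>r x. Sc (r * unSc x)),
              mtop = pullback_topology (range Sc) unSc (Ktop c) \<rparr>"

definition prodm :: "('k, 'a) c0concept \<Rightarrow> ('k, 'a) tmod \<Rightarrow> ('k, 'a) tmod \<Rightarrow> ('k, 'a) tmod" where
  "prodm c E1 E2 = \<lparr> mcar = pset (mcar E1) (mcar E2),
                     mzero = Pr (mzero E1) (mzero E2),
                     madd = (\<lambda>p q. Pr (madd E1 (vfst p) (vfst q)) (madd E2 (vsnd p) (vsnd q))),
                     msmul = (\<lambda>r p. Pr (msmul E1 r (vfst p)) (msmul E2 r (vsnd p))),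
                     mtop = ptop c E1 E2 \<rparr>"

definition kunits :: "'k::comm_ring_1 set" where
  "kunits = {r. r dvd 1}"

definition kinv :: "'k::comm_ring_1 \<Rightarrow> 'k" where
  "kinv r = (SOME s. r * s = 1)"

definition is_C0_concept :: "('k::comm_ring_1, 'a) c0concept \<Rightarrow> bool" where
  "is_C0_concept c \<longleftrightarrow>
   (let M = Mods c; K = Kmod c; C = C0 c; P = prodm c in
     topspace (Ktop c) = UNIV \<and>
     \<comment> \<open>(a), (c)\<close>
     K \<in> M \<and> (\<forall>E\<in>M. is_tmod E) \<and> (\<forall>E1\<in>M. \<forall>E2\<in>M. P E1 E2 \<in> M) \<and>
     \<comment> \<open>(b): C^0-maps are continuous maps U \<rightarrow> F, U open in E; they are maps on U only\<close>
     (\<forall>E F U g. C E F U g \<longrightarrow> E \<in> M \<and> F \<in> M \<and> openin (mtop E) U \<and>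
                continuous_map (subtopology (mtop E) U) (mtop F) g) \<and>
     (\<forall>E F U g g'. C E F U g \<and> (\<forall>x\<in>U. g x = g' x) \<longrightarrow> C E F U g') \<and>
     \<comment> \<open>(I.1)\<close>
     (\<forall>E F G U V g h. C E F U g \<and> C F G V h \<and> g ` U \<subseteq> V \<longrightarrow> C E G U (h \<circ> g)) \<and>
     (\<forall>E\<in>M. \<forall>U. openin (mtop E) U \<longrightarrow> C E E U id) \<and>
     \<comment> \<open>(I.2)\<close>
     (\<forall>E\<in>M. \<forall>r. \<forall>b\<in>mcar E. C E E (mcar E) (\<lambda>x. madd E (msmul E r x) b)) \<and>
     \<comment> \<open>(I.3)\<close>
     (\<forall>E\<in>M. \<forall>v\<in>mcar E. \<forall>x\<in>mcar E. C K E (mcar K) (\<lambda>t. madd E (msmul E (unSc t) v) x)) \<and>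
     \<comment> \<open>(I.4)\<close>
     openin (mtop K) (Sc ` kunits) \<and> C K K (Sc ` kunits) (\<lambda>t. Sc (kinv (unSc t))) \<and>
     \<comment> \<open>(I.5)\<close>
     (\<forall>E\<in>M. \<forall>F\<in>M. \<forall>U \<V> g. (\<forall>V\<in>\<V>. openin (mtop E) V \<and> C E F V g) \<and> \<Union>\<V> = U
          \<longrightarrow> C E F U g) \<and>
     \<comment> \<open>(II.1)\<close>
     (\<forall>E1\<in>M. \<forall>E2\<in>M. C (P E1 E2) E1 (mcar (P E1 E2)) vfst \<and> C (P E1 E2) E2 (mcar (P E1 E2)) vsnd \<and>
          (\<forall>y\<in>mcar E2. C E1 (P E1 E2) (mcar E1) (\<lambda>v. Pr v y)) \<and>
          (\<forall>x\<in>mcar E1. C E2 (P E1 E2) (mcar E2) (\<lambda>w. Pr x w))) \<and>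
     \<comment> \<open>(II.2)\<close>
     (\<forall>E1 E2 F1 F2 U1 U2 f1 f2. C E1 F1 U1 f1 \<and> C E2 F2 U2 f2 \<longrightarrow>
          C (P E1 E2) (P F1 F2) (pset U1 U2) (\<lambda>p. Pr (f1 (vfst p)) (f2 (vsnd p)))) \<and>
     \<comment> \<open>(II.3)\<close>
     (\<forall>E\<in>M. C E (P E E) (mcar E) (\<lambda>x. Pr x x)) \<and>
     \<comment> \<open>(II.4)\<close>
     (\<forall>E1\<in>M. \<forall>E2\<in>M. \<forall>E3\<in>M.
          C (P E1 E2) (P E2 E1) (mcar (P E1 E2)) (\<lambda>p. Pr (vsnd p) (vfst p)) \<and>
          C (P (P E1 E2) E3) (P E1 (P E2 E3)) (mcar (P (P E1 E2) E3))
            (\<lambda>p. Pr (vfst (vfst p)) (Pr (vsnd (vfst p)) (vsnd p))) \<and>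
          C (P E1 (P E2 E3)) (P (P E1 E2) E3) (mcar (P E1 (P E2 E3)))
            (\<lambda>p. Pr (Pr (vfst p) (vfst (vsnd p))) (vsnd (vsnd p)))) \<and>
     \<comment> \<open>(II.5)\<close>
     (\<forall>E\<in>M. C (P E E) E (mcar (P E E)) (\<lambda>p. madd E (vfst p) (vsnd p)) \<and>
          C (P K E) E (mcar (P K E)) (\<lambda>p. msmul E (unSc (vfst p)) (vsnd p))) \<and>
     \<comment> \<open>(III)\<close>
     (\<forall>F U g h. C K F U g \<and> C K F U h \<and> (\<forall>t\<in>U \<inter> Sc ` kunits. g t = h t)
          \<longrightarrow> (\<forall>t\<in>U. g t = h t)))"

text \<open>\<open>V^{[1]} \<subseteq> X \<times> (X \<times> K)\<close>; the triple (x,v,t) is encoded as \<open>Pr x (Pr v t)\<close>.\<close>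
definition X3 :: "('k::comm_ring_1, 'a) c0concept \<Rightarrow> ('k, 'a) tmod \<Rightarrow> ('k, 'a) tmod" where
  "X3 c X = prodm c X (prodm c X (Kmod c))"

definition V1 :: "('k::comm_ring_1, 'a) c0concept \<Rightarrow> ('k, 'a) tmod \<Rightarrow> ('k, 'a) val set \<Rightarrow> ('k, 'a) val set" where
  "V1 c X V = {Pr x (Pr v t) | x v t. x \<in> V \<and> v \<in> mcar X \<and> t \<in> mcar (Kmod c) \<and>
                 madd X x (msmul X (unSc t) v) \<in> V}"

definition is_dq :: "('k::comm_ring_1, 'a) c0concept \<Rightarrow> ('k, 'a) tmod \<Rightarrow> ('k, 'a) tmod \<Rightarrow> ('k, 'a) val set
     \<Rightarrow> (('k, 'a) val \<Rightarrow> ('k, 'a) val) \<Rightarrow> (('k, 'a) val \<Rightarrow> ('k, 'a) val) \<Rightarrow> bool" where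
  "is_dq c X Y V g g1 \<longleftrightarrow> C0 c (X3 c X) Y (V1 c X V) g1 \<and>
     (\<forall>x v t. Pr x (Pr v t) \<in> V1 c X V \<longrightarrow>
        msub Y (g (madd X x (msmul X (unSc t) v))) (g x) = msmul Y (unSc t) (g1 (Pr x (Pr v t))))"

fun itsp :: "('k::comm_ring_1, 'a) c0concept \<Rightarrow> nat \<Rightarrow> ('k, 'a) tmod \<Rightarrow> ('k, 'a) tmod" where
  "itsp c 0 X = X"
| "itsp c (Suc j) X = X3 c (itsp c j X)"

fun itdom :: "('k::comm_ring_1, 'a) c0concept \<Rightarrow> nat \<Rightarrow> ('k, 'a) tmod \<Rightarrow> ('k, 'a) val set \<Rightarrow> ('k, 'a) val set" where
  "itdom c 0 X V = V"
| "itdom c (Suc j) X V = V1 c (itsp c j X) (itdom c j X V)"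

definition Ck :: "('k::comm_ring_1, 'a) c0concept \<Rightarrow> nat \<Rightarrow> ('k, 'a) tmod \<Rightarrow> ('k, 'a) tmod
     \<Rightarrow> ('k, 'a) val set \<Rightarrow> (('k, 'a) val \<Rightarrow> ('k, 'a) val) \<Rightarrow> bool" where
  "Ck c k X Y V g \<longleftrightarrow> (\<exists>G. G 0 = g \<and>
     (\<forall>j\<le>k. C0 c (itsp c j X) Y (itdom c j X V) (G j)) \<and>
     (\<forall>j<k. is_dq c (itsp c j X) Y (itdom c j X V) (G j) (G (Suc j))))"

text \<open>The (unique, by (III)) first difference quotient, and derivatives.\<close>
definition dq :: "('k::comm_ring_1, 'a) c0concept \<Rightarrow> ('k, 'a) tmod \<Rightarrow> ('k, 'a) tmod \<Rightarrow> ('k, 'a) val set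
     \<Rightarrow> (('k, 'a) val \<Rightarrow> ('k, 'a) val) \<Rightarrow> ('k, 'a) val \<Rightarrow> ('k, 'a) val" where
  "dq c X Y V g = (SOME g1. is_dq c X Y V g g1)"

definition dd :: "('k::comm_ring_1, 'a) c0concept \<Rightarrow> ('k, 'a) tmod \<Rightarrow> ('k, 'a) tmod \<Rightarrow> ('k, 'a) val set
     \<Rightarrow> (('k, 'a) val \<Rightarrow> ('k, 'a) val) \<Rightarrow> ('k, 'a) val \<Rightarrow> ('k, 'a) val \<Rightarrow> ('k, 'a) val" where
  "dd c X Y V g x v = dq c X Y V g (Pr x (Pr v (Sc 0)))"

definition dd2 :: "('k::comm_ring_1, 'a) c0concept \<Rightarrow> ('k, 'a) tmod \<Rightarrow> ('k, 'a) tmod \<Rightarrow> ('k, 'a) val set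
     \<Rightarrow> (('k, 'a) val \<Rightarrow> ('k, 'a) val) \<Rightarrow> ('k, 'a) val \<Rightarrow> ('k, 'a) val \<Rightarrow> ('k, 'a) val \<Rightarrow> ('k, 'a) val" where
  "dd2 c X Y V g x v w = dd c X Y V (\<lambda>y. dd c X Y V g y w) x v"

definition is_linear_map :: "('k::comm_ring_1, 'a) tmod \<Rightarrow> ('k, 'a) tmod \<Rightarrow> (('k, 'a) val \<Rightarrow> ('k, 'a) val) \<Rightarrow> bool" where
  "is_linear_map E F L \<longleftrightarrow>
     (\<forall>h1\<in>mcar E. \<forall>h2\<in>mcar E. L (madd E h1 h2) = madd F (L h1) (L h2)) \<and>
     (\<forall>r. \<forall>h\<in>mcar E. L (msmul E r h) = msmul F r (L h))"

definition is_bilinear_map :: "('k::comm_ring_1, 'a) tmod \<Rightarrow> ('k, 'a) tmod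
     \<Rightarrow> (('k, 'a) val \<Rightarrow> ('k, 'a) val \<Rightarrow> ('k, 'a) val) \<Rightarrow> bool" where
  "is_bilinear_map E F B \<longleftrightarrow>
     (\<forall>h1\<in>mcar E. is_linear_map E F (\<lambda>h2. B h1 h2)) \<and>
     (\<forall>h2\<in>mcar E. is_linear_map E F (\<lambda>h1. B h1 h2))"

definition is_quadratic_form :: "('k::comm_ring_1, 'a) tmod \<Rightarrow> ('k, 'a) tmod \<Rightarrow> (('k, 'a) val \<Rightarrow> ('k, 'a) val) \<Rightarrow> bool" where
  "is_quadratic_form E F q \<longleftrightarrow>
     (\<forall>t. \<forall>h\<in>mcar E. q (msmul E t h) = msmul F (t ^ 2) (q h)) \<and>
     is_bilinear_map E F (\<lambda>h1 h2. msub F (msub F (q (madd E h1 h2)) (q h1)) (q h2))"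

end

theory Submission
  imports Defs
begin

(* Everything runs on axiom (III) in the form of C0_eq_by_units: two C^0-curves u, v from K
   to F agree at t = 0 as soon as t^n u(t) = t^n v(t) for all units t, since there the factor
   t^n cancels.  The expansion and the difference quotients supply such identities.  From
   t f^[1](x,h,t) = f(x+th) - f(x) = t (a_1(x,h) + t ...) we get a_1(x,h) = df(x)h; comparing
   the expansions at (x, rh, t) and (x, h, rt) gives a_2(x,rh) = r^2 a_2(x,h); and the second
   difference f(x+t(h1+h2)) - f(x+th1) - f(x+th2) + f(x) = t^2 f^[2]((x,h2,t),(h1,0,0),t)
   gives a_2(x,h1+h2) - a_2(x,h1) - a_2(x,h2) = d^2f(x)(h1,h2).  The same device shows that
   every dg(x) is linear; applied to g = df(.)h2 it makes d^2f(x)(h1,h2) linear in h1, and as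
   the left-hand side is symmetric in h1, h2 it is bilinear.  Finally
   2 a_2(x,h) = a_2(x,2h) - 2 a_2(x,h) = d^2f(x)(h,h). *)

section \<open>Topological modules\<close>

locale tmodule =
  fixes E :: "('k::comm_ring_1, 'a) tmod"
  assumes is_tmod: "is_tmod E"
begin

lemma
  shows topspace_mtop: "topspace (mtop E) = mcar E"
    and zero_closed [simp]: "mzero E \<in> mcar E"
    and add_closed [simp]: "x \<in> mcar E \<Longrightarrow> y \<in> mcar E \<Longrightarrow> madd E x y \<in> mcar E"
    and smul_closed [simp]: "x \<in> mcar E \<Longrightarrow> msmul E r x \<in> mcar E"
    and add_assoc: "x \<in> mcar E \<Longrightarrow> y \<in> mcar E \<Longrightarrow> z \<in> mcar E \<Longrightarrow>
      madd E (madd E x y) z = madd E x (madd E y z)"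
    and add_commute: "x \<in> mcar E \<Longrightarrow> y \<in> mcar E \<Longrightarrow> madd E x y = madd E y x"
    and zero_add [simp]: "x \<in> mcar E \<Longrightarrow> madd E (mzero E) x = x"
    and exists_neg: "x \<in> mcar E \<Longrightarrow> \<exists>y\<in>mcar E. madd E x y = mzero E"
    and smul_add_right: "x \<in> mcar E \<Longrightarrow> y \<in> mcar E \<Longrightarrow>
      msmul E r (madd E x y) = madd E (msmul E r x) (msmul E r y)"
    and smul_add_left: "x \<in> mcar E \<Longrightarrow> msmul E (r + s) x = madd E (msmul E r x) (msmul E s x)"
    and smul_smul [simp]: "x \<in> mcar E \<Longrightarrow> msmul E r (msmul E s x) = msmul E (r * s) x"
    and smul_one [simp]: "x \<in> mcar E \<Longrightarrow> msmul E 1 x = x"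
  using is_tmod unfolding is_tmod_def by (elim conjE, metis)+

lemma add_left_commute: "x \<in> mcar E \<Longrightarrow> y \<in> mcar E \<Longrightarrow> z \<in> mcar E \<Longrightarrow>
    madd E x (madd E y z) = madd E y (madd E x z)"
  by (metis add_assoc add_commute)

lemmas add_ac = add_assoc add_commute add_left_commute

lemma add_zero [simp]: "x \<in> mcar E \<Longrightarrow> madd E x (mzero E) = x"
  using add_commute[of x "mzero E"] by simp

lemma add_right_cancel:
  assumes "x \<in> mcar E" "y \<in> mcar E" "z \<in> mcar E" "madd E x z = madd E y z"
  shows "x = y"
proof -
  obtain w where w: "w \<in> mcar E" "madd E z w = mzero E" using exists_neg assms(3) by blast
  have "x = madd E (madd E x z) w" using assms w by (metis add_assoc add_zero)
  also have "\<dots> = y" using assms w by (metis add_assoc add_zero)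
  finally show ?thesis .
qed

lemma add_left_cancel:
  "a \<in> mcar E \<Longrightarrow> x \<in> mcar E \<Longrightarrow> y \<in> mcar E \<Longrightarrow> madd E a x = madd E a y \<Longrightarrow> x = y"
  using add_right_cancel add_commute by metis

lemma smul_zero_left [simp]: "x \<in> mcar E \<Longrightarrow> msmul E 0 x = mzero E"
  using add_right_cancel[of "msmul E 0 x" "mzero E" "msmul E 0 x"] smul_add_left[of x 0 0] by simp

lemma smul_zero_right [simp]: "msmul E r (mzero E) = mzero E"
  using smul_smul[of "mzero E" r 0] by simp

lemma add_smul_neg_one: "x \<in> mcar E \<Longrightarrow> madd E x (msmul E (-1) x) = mzero E"
  using smul_add_left[of x 1 "-1"] by simp

lemma sub_closed [simp]: "x \<in> mcar E \<Longrightarrow> y \<in> mcar E \<Longrightarrow> msub E x y \<in> mcar E"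
  unfolding msub_def by simp

lemma sub_eq_iff: "a \<in> mcar E \<Longrightarrow> b \<in> mcar E \<Longrightarrow> c \<in> mcar E \<Longrightarrow>
    msub E a b = c \<longleftrightarrow> a = madd E c b"
  unfolding msub_def by (metis add_assoc add_commute smul_closed add_smul_neg_one add_zero)

lemma add_sub_cancel [simp]: "a \<in> mcar E \<Longrightarrow> b \<in> mcar E \<Longrightarrow> msub E (madd E a b) b = a"
  using sub_eq_iff by simp

lemma add_sub_cancel_left [simp]: "a \<in> mcar E \<Longrightarrow> b \<in> mcar E \<Longrightarrow> msub E (madd E a b) a = b"
  using sub_eq_iff add_commute by simp

lemma sub_add_cancel [simp]: "a \<in> mcar E \<Longrightarrow> b \<in> mcar E \<Longrightarrow> madd E (msub E a b) b = a"
  using sub_eq_iff by (metis sub_closed)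

lemma smul_sub: "a \<in> mcar E \<Longrightarrow> b \<in> mcar E \<Longrightarrow>
    msmul E r (msub E a b) = msub E (msmul E r a) (msmul E r b)"
  unfolding msub_def by (simp add: smul_add_right mult.commute)

lemma sub_add_sub:
  assumes "a \<in> mcar E" "b \<in> mcar E" "c \<in> mcar E"
  shows "madd E (msub E a b) (msub E b c) = msub E a c"
proof -
  have "a = madd E (madd E (msub E a b) (msub E b c)) c"
    using assms by (simp add: add_assoc)
  then show ?thesis using assms sub_eq_iff by (metis add_closed sub_closed)
qed

lemma sub_sub_commute:
  assumes "x \<in> mcar E" "a \<in> mcar E" "b \<in> mcar E"
  shows "msub E (msub E x a) b = msub E (msub E x b) a"
proof -
  define d where "d = msub E (msub E x a) b"
  have d: "d \<in> mcar E" using assms by (simp add: d_def)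
  have "madd E (madd E d a) b = madd E (madd E d b) a"
    using assms d by (simp add: add_assoc add_commute[of a b])
  also have "\<dots> = x" using assms by (simp add: d_def)
  finally have "msub E x b = madd E d a" using assms d by (simp add: sub_eq_iff)
  then have "msub E (msub E x b) a = d" using assms d by (simp add: sub_eq_iff)
  then show ?thesis by (simp add: d_def)
qed

lemma add_smul_add_smul: "x \<in> mcar E \<Longrightarrow> v \<in> mcar E \<Longrightarrow> w \<in> mcar E \<Longrightarrow>
    madd E (madd E x (msmul E s v)) (msmul E s w) = madd E x (msmul E s (madd E v w))"
  by (simp add: smul_add_right add_assoc)

lemma unit_smul_cancel:
  assumes "s \<in> kunits" "x \<in> mcar E" "y \<in> mcar E" "msmul E s x = msmul E s y"
  shows "x = y"
proof -
  obtain s' where "s' * s = 1" using assms(1) unfolding kunits_def by (metis dvdE mem_Collect_eq mult.commute)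
  then show ?thesis by (metis assms(2-4) smul_smul smul_one)
qed

lemma second_difference_cancel:
  assumes "b \<in> mcar E" "u1 \<in> mcar E" "u2 \<in> mcar E" "v12 \<in> mcar E" "v1 \<in> mcar E" "v2 \<in> mcar E"
  shows "msub E (msub E (madd E b (madd E (madd E u1 u2) v12)) (madd E b (madd E u1 v1)))
      (msub E (madd E b (madd E u2 v2)) b) = msub E (msub E v12 v1) v2"
proof -
  define w where "w = msub E (msub E v12 v1) v2"
  have w: "w \<in> mcar E" using assms by (simp add: w_def)
  have v12: "v12 = madd E (madd E w v2) v1" using assms by (simp add: w_def)
  have "madd E b (madd E (madd E u1 u2) v12) = madd E (madd E u2 (madd E w v2)) (madd E b (madd E u1 v1))"
    unfolding v12 using assms w by (simp add: add_ac)
  then have "msub E (madd E b (madd E (madd E u1 u2) v12)) (madd E b (madd E u1 v1)) = madd E u2 (madd E w v2)"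
    using assms w by simp
  moreover have "madd E u2 (madd E w v2) = madd E w (madd E u2 v2)"
    using assms w by (simp add: add_ac)
  ultimately show ?thesis using assms w by (simp add: w_def[symmetric])
qed

lemma is_linear_map_cong:
  "is_linear_map E F L \<Longrightarrow> (\<And>h. h \<in> mcar E \<Longrightarrow> L h = L' h) \<Longrightarrow> is_linear_map E F L'"
  unfolding is_linear_map_def by simp

lemma msumn_closed [simp]: "(\<And>j. j < n \<Longrightarrow> h j \<in> mcar E) \<Longrightarrow> msumn E n h \<in> mcar E"
  by (induction n) auto

lemma msumn_Suc_shift: "(\<And>j. j \<le> n \<Longrightarrow> h j \<in> mcar E) \<Longrightarrow>
    msumn E (Suc n) h = madd E (h 0) (msumn E n (\<lambda>j. h (Suc j)))"
  by (induction n) (simp_all add: add_assoc)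

lemma smul_msumn: "(\<And>j. j < n \<Longrightarrow> h j \<in> mcar E) \<Longrightarrow>
    msmul E r (msumn E n h) = msumn E n (\<lambda>j. msmul E r (h j))"
  by (induction n) (auto simp: smul_add_right)

end

lemma msumn_cong: "(\<And>j. j < n \<Longrightarrow> h j = h' j) \<Longrightarrow> msumn E n h = msumn E n h'"
  by (induction n) auto

section \<open>\<open>C\<^sup>0\<close>-concepts\<close>

lemma Kmod_simps [simp]:
  "mcar (Kmod c) = range Sc" "mzero (Kmod c) = Sc 0"
  "madd (Kmod c) x y = Sc (unSc x + unSc y)" "msmul (Kmod c) r x = Sc (r * unSc x)"
  "mtop (Kmod c) = pullback_topology (range Sc) unSc (Ktop c)"
  by (simp_all add: Kmod_def)

lemma prodm_simps [simp]:
  "mcar (prodm c E1 E2) = pset (mcar E1) (mcar E2)"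
  "mzero (prodm c E1 E2) = Pr (mzero E1) (mzero E2)"
  "madd (prodm c E1 E2) p q = Pr (madd E1 (vfst p) (vfst q)) (madd E2 (vsnd p) (vsnd q))"
  "msmul (prodm c E1 E2) r p = Pr (msmul E1 r (vfst p)) (msmul E2 r (vsnd p))"
  "mtop (prodm c E1 E2) = ptop c E1 E2"
  by (simp_all add: prodm_def)

lemma Pr_in_pset [simp]: "Pr x y \<in> pset A B \<longleftrightarrow> x \<in> A \<and> y \<in> B"
  by (simp add: pset_def)

lemma Pr_in_V1 [simp]: "Pr x (Pr v t) \<in> V1 c X V \<longleftrightarrow>
    x \<in> V \<and> v \<in> mcar X \<and> t \<in> range Sc \<and> madd X x (msmul X (unSc t) v) \<in> V"
  by (auto simp: V1_def)

definition line_params :: "('k::comm_ring_1, 'a) tmod \<Rightarrow> ('k, 'a) val set \<Rightarrow> ('k, 'a) val \<Rightarrow> ('k, 'a) val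
    \<Rightarrow> ('k, 'a) val set" where
  "line_params X V x v = {t \<in> range Sc. madd X x (msmul X (unSc t) v) \<in> V}"

lemma Pr_in_V1_iff: "x \<in> V \<Longrightarrow> v \<in> mcar X \<Longrightarrow> Pr x (Pr v t) \<in> V1 c X V \<longleftrightarrow> t \<in> line_params X V x v"
  by (auto simp: line_params_def)

lemma line_params_subset: "line_params X V x v \<subseteq> range Sc"
  by (auto simp: line_params_def)

locale c0_concept =
  fixes c :: "('k::comm_ring_1, 'a) c0concept"
  assumes is_C0_concept: "is_C0_concept c"
begin

abbreviation "K \<equiv> Kmod c"
abbreviation "C \<equiv> C0 c"
abbreviation "P \<equiv> prodm c"

lemmas concept_axioms = is_C0_concept[unfolded is_C0_concept_def Let_def]

lemma Kmod_in_Mods [simp]: "K \<in> Mods c"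
  using concept_axioms by (elim conjE) assumption

lemma tmodule_Mods: "E \<in> Mods c \<Longrightarrow> tmodule E"
proof -
  have "\<forall>E\<in>Mods c. is_tmod E" using concept_axioms by (elim conjE) assumption
  then show "E \<in> Mods c \<Longrightarrow> tmodule E" by (simp add: tmodule_def)
qed

lemma prodm_in_Mods [simp]: "E1 \<in> Mods c \<Longrightarrow> E2 \<in> Mods c \<Longrightarrow> P E1 E2 \<in> Mods c"
proof -
  have "\<forall>E1\<in>Mods c. \<forall>E2\<in>Mods c. P E1 E2 \<in> Mods c" using concept_axioms by (elim conjE) assumption
  then show "E1 \<in> Mods c \<Longrightarrow> E2 \<in> Mods c \<Longrightarrow> P E1 E2 \<in> Mods c" by blast
qed

lemma C0D:
  assumes "C E F U g"
  shows "E \<in> Mods c" "F \<in> Mods c" "openin (mtop E) U"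
    and "continuous_map (subtopology (mtop E) U) (mtop F) g"
proof -
  have "\<forall>E F U g. C E F U g \<longrightarrow> E \<in> Mods c \<and> F \<in> Mods c \<and> openin (mtop E) U \<and>
      continuous_map (subtopology (mtop E) U) (mtop F) g"
    using concept_axioms by (elim conjE) assumption
  with assms show "E \<in> Mods c" "F \<in> Mods c" "openin (mtop E) U"
    and "continuous_map (subtopology (mtop E) U) (mtop F) g" by blast+
qed

lemma C0_cong:
  assumes "C E F U g" "\<And>x. x \<in> U \<Longrightarrow> g x = g' x"
  shows "C E F U g'"
proof -
  have "\<forall>E F U g g'. C E F U g \<and> (\<forall>x\<in>U. g x = g' x) \<longrightarrow> C E F U g'"
    using concept_axioms by (elim conjE) assumption
  with assms show ?thesis by blast
qed

lemma C0_comp: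
  assumes "C E F U g" "C F G V h" "g ` U \<subseteq> V"
  shows "C E G U (h \<circ> g)"
proof -
  have "\<forall>E F G U V g h. C E F U g \<and> C F G V h \<and> g ` U \<subseteq> V \<longrightarrow> C E G U (h \<circ> g)"
    using concept_axioms by (elim conjE) assumption
  with assms show ?thesis by blast
qed

lemma C0_id:
  assumes "E \<in> Mods c" "openin (mtop E) U"
  shows "C E E U id"
proof -
  have "\<forall>E\<in>Mods c. \<forall>U. openin (mtop E) U \<longrightarrow> C E E U id"
    using concept_axioms by (elim conjE) assumption
  with assms show ?thesis by blast
qed

lemma C0_affine:
  assumes "E \<in> Mods c" "b \<in> mcar E"
  shows "C E E (mcar E) (\<lambda>x. madd E (msmul E r x) b)"
proof -
  have "\<forall>E\<in>Mods c. \<forall>r. \<forall>b\<in>mcar E. C E E (mcar E) (\<lambda>x. madd E (msmul E r x) b)"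
    using concept_axioms by (elim conjE) assumption
  with assms show ?thesis by blast
qed

lemma C0_line:
  assumes "E \<in> Mods c" "v \<in> mcar E" "x \<in> mcar E"
  shows "C K E (mcar K) (\<lambda>t. madd E (msmul E (unSc t) v) x)"
proof -
  have "\<forall>E\<in>Mods c. \<forall>v\<in>mcar E. \<forall>x\<in>mcar E. C K E (mcar K) (\<lambda>t. madd E (msmul E (unSc t) v) x)"
    using concept_axioms by (elim conjE) assumption
  with assms show ?thesis by blast
qed

lemma C0_eq_on_units:
  assumes "C K F U g" "C K F U h" "\<And>t. t \<in> U \<Longrightarrow> t \<in> Sc ` kunits \<Longrightarrow> g t = h t" "t \<in> U"
  shows "g t = h t"
proof -
  have "\<forall>F U g h. C K F U g \<and> C K F U h \<and> (\<forall>t\<in>U \<inter> Sc ` kunits. g t = h t)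
      \<longrightarrow> (\<forall>t\<in>U. g t = h t)"
    using concept_axioms by (elim conjE) assumption
  with assms show ?thesis by blast
qed

lemma
  assumes "E1 \<in> Mods c" "E2 \<in> Mods c"
  shows C0_fst: "C (P E1 E2) E1 (mcar (P E1 E2)) vfst"
    and C0_snd: "C (P E1 E2) E2 (mcar (P E1 E2)) vsnd"
    and C0_Pr_left: "y \<in> mcar E2 \<Longrightarrow> C E1 (P E1 E2) (mcar E1) (\<lambda>v. Pr v y)"
proof -
  have "\<forall>E1\<in>Mods c. \<forall>E2\<in>Mods c. C (P E1 E2) E1 (mcar (P E1 E2)) vfst \<and>
      C (P E1 E2) E2 (mcar (P E1 E2)) vsnd \<and>
      (\<forall>y\<in>mcar E2. C E1 (P E1 E2) (mcar E1) (\<lambda>v. Pr v y)) \<and>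
      (\<forall>x\<in>mcar E1. C E2 (P E1 E2) (mcar E2) (\<lambda>w. Pr x w))"
    using concept_axioms by (elim conjE) assumption
  with assms show "C (P E1 E2) E1 (mcar (P E1 E2)) vfst" "C (P E1 E2) E2 (mcar (P E1 E2)) vsnd"
    and "y \<in> mcar E2 \<Longrightarrow> C E1 (P E1 E2) (mcar E1) (\<lambda>v. Pr v y)" by blast+
qed

lemma C0_map_prod:
  assumes "C E1 F1 U1 f1" "C E2 F2 U2 f2"
  shows "C (P E1 E2) (P F1 F2) (pset U1 U2) (\<lambda>p. Pr (f1 (vfst p)) (f2 (vsnd p)))"
proof -
  have "\<forall>E1 E2 F1 F2 U1 U2 f1 f2. C E1 F1 U1 f1 \<and> C E2 F2 U2 f2 \<longrightarrow>
      C (P E1 E2) (P F1 F2) (pset U1 U2) (\<lambda>p. Pr (f1 (vfst p)) (f2 (vsnd p)))"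
    using concept_axioms by (elim conjE) assumption
  with assms show ?thesis by blast
qed

lemma C0_diag:
  assumes "E \<in> Mods c"
  shows "C E (P E E) (mcar E) (\<lambda>x. Pr x x)"
proof -
  have "\<forall>E\<in>Mods c. C E (P E E) (mcar E) (\<lambda>x. Pr x x)"
    using concept_axioms by (elim conjE) assumption
  with assms show ?thesis by blast
qed

lemma
  assumes "E \<in> Mods c"
  shows C0_add: "C (P E E) E (mcar (P E E)) (\<lambda>p. madd E (vfst p) (vsnd p))"
    and C0_smul: "C (P K E) E (mcar (P K E)) (\<lambda>p. msmul E (unSc (vfst p)) (vsnd p))"
proof -
  have "\<forall>E\<in>Mods c. C (P E E) E (mcar (P E E)) (\<lambda>p. madd E (vfst p) (vsnd p)) \<and>
      C (P K E) E (mcar (P K E)) (\<lambda>p. msmul E (unSc (vfst p)) (vsnd p))"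
    using concept_axioms by (elim conjE) assumption
  with assms show "C (P E E) E (mcar (P E E)) (\<lambda>p. madd E (vfst p) (vsnd p))"
    and "C (P K E) E (mcar (P K E)) (\<lambda>p. msmul E (unSc (vfst p)) (vsnd p))" by blast+
qed

lemma topspace_mtop_Mods: "E \<in> Mods c \<Longrightarrow> topspace (mtop E) = mcar E"
  using tmodule.topspace_mtop[OF tmodule_Mods] .

lemma C0_subset_mcar: "C E F U g \<Longrightarrow> U \<subseteq> mcar E"
  using openin_subset[OF C0D(3)] topspace_mtop_Mods[OF C0D(1)] by simp

lemma C0_in_mcar:
  assumes "C E F U g" "x \<in> U"
  shows "g x \<in> mcar F"
proof -
  have "g ` topspace (subtopology (mtop E) U) \<subseteq> topspace (mtop F)"
    using C0D(4)[OF assms(1)] by (rule continuous_map_image_subset_topspace)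
  moreover have "x \<in> topspace (subtopology (mtop E) U)"
    using assms C0_subset_mcar[OF assms(1)] topspace_mtop_Mods[OF C0D(1)[OF assms(1)]] by auto
  ultimately show ?thesis using topspace_mtop_Mods[OF C0D(2)[OF assms(1)]] by blast
qed

lemma C0_compose: "C E F U g \<Longrightarrow> C F G V h \<Longrightarrow> (\<And>x. x \<in> U \<Longrightarrow> g x \<in> V) \<Longrightarrow>
    C E G U (\<lambda>x. h (g x))"
  using C0_comp[of E F U g G V h] by (auto simp: comp_def)

lemma C0_restrict:
  assumes "C E F U g" "openin (mtop E) V" "V \<subseteq> U"
  shows "C E F V g"
  using C0_compose[OF C0_id[OF C0D(1)[OF assms(1)] assms(2)] assms(1)] assms(3) by auto

lemma C0_Pr:
  assumes "C X Y1 V g1" "C X Y2 V g2"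
  shows "C X (P Y1 Y2) V (\<lambda>x. Pr (g1 x) (g2 x))"
proof -
  have "C X (P X X) V (\<lambda>x. Pr x x)"
    using C0_restrict[OF C0_diag[OF C0D(1)[OF assms(1)]] C0D(3)[OF assms(1)] C0_subset_mcar[OF assms(1)]] .
  from C0_compose[OF this C0_map_prod[OF assms]] show ?thesis by simp
qed

lemma C0_const:
  assumes "X \<in> Mods c" "Y \<in> Mods c" "openin (mtop X) V" "b \<in> mcar Y"
  shows "C X Y V (\<lambda>_. b)"
proof -
  have "C X Y (mcar X) (\<lambda>v. vsnd (Pr v b))"
    using C0_compose[OF C0_Pr_left[OF assms(1,2,4)] C0_snd[OF assms(1,2)]] assms by simp
  then show ?thesis
    using C0_restrict[OF _ assms(3)] openin_subset[OF assms(3)] topspace_mtop_Mods[OF assms(1)] by simp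
qed

lemma C0_madd:
  assumes "C X Y V g1" "C X Y V g2"
  shows "C X Y V (\<lambda>x. madd Y (g1 x) (g2 x))"
  using C0_compose[OF C0_Pr[OF assms] C0_add[OF C0D(2)[OF assms(1)]]] C0_in_mcar assms by simp

lemma C0_msmul_fun:
  assumes "C X K V s" "C X Y V g"
  shows "C X Y V (\<lambda>x. msmul Y (unSc (s x)) (g x))"
  using C0_compose[OF C0_Pr[OF assms] C0_smul[OF C0D(2)[OF assms(2)]]] C0_in_mcar assms
  by (simp del: Kmod_simps)

lemma C0_msmul:
  assumes "C X Y V g"
  shows "C X Y V (\<lambda>x. msmul Y r (g x))"
proof -
  interpret Y: tmodule Y using tmodule_Mods[OF C0D(2)[OF assms]] .
  have "C X Y V (\<lambda>x. madd Y (msmul Y r (g x)) (mzero Y))"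
    using C0_compose[OF assms C0_affine[OF C0D(2)[OF assms] Y.zero_closed]] C0_in_mcar[OF assms] by auto
  then show ?thesis by (rule C0_cong) (simp add: C0_in_mcar[OF assms])
qed

lemma C0_msub: "C X Y V g1 \<Longrightarrow> C X Y V g2 \<Longrightarrow> C X Y V (\<lambda>x. msub Y (g1 x) (g2 x))"
  unfolding msub_def by (intro C0_madd C0_msmul)

lemma C0_msumn:
  assumes "X \<in> Mods c" "Y \<in> Mods c" "openin (mtop X) V" "\<And>j. j < n \<Longrightarrow> C X Y V (g j)"
  shows "C X Y V (\<lambda>x. msumn Y n (\<lambda>j. g j x))"
  using assms(4)
proof (induction n)
  case 0
  then show ?case using C0_const assms tmodule.zero_closed[OF tmodule_Mods] by simp
next
  case (Suc n)
  then show ?case using C0_madd by simp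
qed

lemma C0_ident: "E \<in> Mods c \<Longrightarrow> openin (mtop E) U \<Longrightarrow> C E E U (\<lambda>x. x)"
  using C0_cong[OF C0_id] by simp

lemma C0_power_smul:
  assumes "C K Y W g"
  shows "C K Y W (\<lambda>t. msmul Y (unSc t ^ j) (g t))"
proof (induction j)
  case 0
  show ?case using assms
    by (rule C0_cong) (simp add: tmodule.smul_one[OF tmodule_Mods[OF C0D(2)[OF assms]]] C0_in_mcar[OF assms])
next
  case (Suc j)
  from C0_msmul_fun[OF C0_ident[OF Kmod_in_Mods C0D(3)[OF assms]] this] show ?case
    by (rule C0_cong) (simp add: tmodule.smul_smul[OF tmodule_Mods[OF C0D(2)[OF assms]]] C0_in_mcar[OF assms])
qed

lemma C0_K_scale: "C K K (mcar K) (\<lambda>t. Sc (r * unSc t))"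
  using C0_affine[OF Kmod_in_Mods, of "Sc 0" r] by (rule C0_cong) auto


lemma C0_eq_by_units:
  assumes g: "C K Y W g" and h: "C K Y W h" and "t \<in> W"
    and units: "\<And>s. s \<in> kunits \<Longrightarrow> Sc s \<in> W \<Longrightarrow> msmul Y (s ^ n) (g (Sc s)) = msmul Y (s ^ n) (h (Sc s))"
  shows "g t = h t"
proof (rule C0_eq_on_units[OF g h _ \<open>t \<in> W\<close>])
  fix t assume "t \<in> W" "t \<in> Sc ` kunits"
  then obtain s where s: "t = Sc s" "s \<in> kunits" "Sc s \<in> W" by blast
  have "s ^ n \<in> kunits" using s(2) dvd_power_same[of s 1 n] by (simp add: kunits_def)
  then show "g t = h t"
    using tmodule.unit_smul_cancel[OF tmodule_Mods[OF C0D(2)[OF g]]] units[OF s(2,3)]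
      C0_in_mcar[OF g] C0_in_mcar[OF h] s by simp
qed

lemma openin_line_params:
  assumes "X \<in> Mods c" "openin (mtop X) V" "x \<in> mcar X" "v \<in> mcar X"
  shows "openin (mtop K) (line_params X V x v)"
proof -
  interpret X: tmodule X using tmodule_Mods[OF assms(1)] .
  have "continuous_map (mtop K) (mtop X) (\<lambda>t. madd X (msmul X (unSc t) v) x)"
    using C0D(4)[OF C0_line[OF assms(1,4,3)]] topspace_mtop_Mods[OF Kmod_in_Mods]
    by (metis subtopology_topspace)
  then have "openin (mtop K) {t \<in> topspace (mtop K). madd X (msmul X (unSc t) v) x \<in> V}"
    using openin_continuous_map_preimage assms(2) by blast
  then show ?thesis
    using topspace_mtop_Mods[OF Kmod_in_Mods] X.add_commute assms(3,4)
    by (simp add: line_params_def)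
qed

lemma zero_in_line_params:
  "X \<in> Mods c \<Longrightarrow> x \<in> V \<Longrightarrow> V \<subseteq> mcar X \<Longrightarrow> v \<in> mcar X \<Longrightarrow> Sc 0 \<in> line_params X V x v"
  using tmodule.smul_zero_left[OF tmodule_Mods] tmodule.add_zero[OF tmodule_Mods]
  by (auto simp: line_params_def subsetD)

lemma C0_Pr_curve:
  assumes "X \<in> Mods c" "x \<in> mcar X" "v \<in> mcar X" "openin (mtop K) W"
  shows "C K (X3 c X) W (\<lambda>t. Pr x (Pr v t))"
  unfolding X3_def by (intro C0_Pr C0_const C0_ident Kmod_in_Mods) (use assms in auto)

lemma C0_line_on:
  assumes "X \<in> Mods c" "x \<in> mcar X" "v \<in> mcar X" "openin (mtop K) W" "W \<subseteq> range Sc"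
  shows "C K X W (\<lambda>t. madd X x (msmul X (unSc t) v))"
proof -
  have "C K X W (\<lambda>t. madd X (msmul X (unSc t) v) x)"
    using C0_restrict[OF C0_line[OF assms(1,3,2)] assms(4)] assms(5) by simp
  then show ?thesis
    by (rule C0_cong) (use assms tmodule.add_commute[OF tmodule_Mods] tmodule.smul_closed[OF tmodule_Mods] in auto)
qed

end

section \<open>Difference quotients\<close>

locale c1_map = c0_concept c for c :: "('k::comm_ring_1, 'a) c0concept" +
  fixes X Y :: "('k, 'a) tmod" and V :: "('k, 'a) val set"
    and g g1 :: "('k, 'a) val \<Rightarrow> ('k, 'a) val"
  assumes C0_g: "C X Y V g" and is_dq_g1: "is_dq c X Y V g g1"
begin

lemma X_in_Mods: "X \<in> Mods c" and Y_in_Mods: "Y \<in> Mods c" and open_V: "openin (mtop X) V"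
  using C0D[OF C0_g] by auto

lemma V_subset: "V \<subseteq> mcar X"
  using C0_subset_mcar[OF C0_g] .

sublocale dom: tmodule X using tmodule_Mods[OF X_in_Mods] .
sublocale cod: tmodule Y using tmodule_Mods[OF Y_in_Mods] .

lemma C0_g1: "C (X3 c X) Y (V1 c X V) g1"
  using is_dq_g1 unfolding is_dq_def by blast

lemma g1_in_mcar: "p \<in> V1 c X V \<Longrightarrow> g1 p \<in> mcar Y"
  using C0_in_mcar[OF C0_g1] .

lemma g_diff_eq: "Pr x (Pr v t) \<in> V1 c X V \<Longrightarrow>
    msub Y (g (madd X x (msmul X (unSc t) v))) (g x) = msmul Y (unSc t) (g1 (Pr x (Pr v t)))"
  using is_dq_g1 unfolding is_dq_def by blast

lemma openin_line_params_V: "x \<in> V \<Longrightarrow> v \<in> mcar X \<Longrightarrow> openin (mtop K) (line_params X V x v)"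
  using openin_line_params[OF X_in_Mods open_V] V_subset by blast

lemma zero_in_line_params_V: "x \<in> V \<Longrightarrow> v \<in> mcar X \<Longrightarrow> Sc 0 \<in> line_params X V x v"
  using zero_in_line_params[OF X_in_Mods _ V_subset] .

lemma C0_g1_line:
  assumes "x \<in> V" "v \<in> mcar X" "openin (mtop K) W" "W \<subseteq> line_params X V x v"
  shows "C K Y W (\<lambda>t. g1 (Pr x (Pr v t)))"
  using C0_compose[OF C0_Pr_curve[OF X_in_Mods _ assms(2,3)] C0_g1] assms V_subset Pr_in_V1_iff
  by blast

lemma dq_unique:
  assumes dq': "is_dq c X Y V g g1'" and p: "p \<in> V1 c X V"
  shows "g1' p = g1 p"
proof -
  interpret g1': c1_map c X Y V g g1' using C0_g dq' by unfold_locales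
  obtain x v t where xvt: "p = Pr x (Pr v t)" "x \<in> V" "v \<in> mcar X" "t \<in> line_params X V x v"
    using p by (auto simp: V1_def line_params_def)
  let ?W = "line_params X V x v"
  have W: "openin (mtop K) ?W" using openin_line_params_V[OF xvt(2,3)] .
  show ?thesis unfolding xvt(1)
  proof (rule C0_eq_by_units[OF g1'.C0_g1_line C0_g1_line, where n = 1])
    fix s assume "Sc s \<in> ?W"
    then have "Pr x (Pr v (Sc s)) \<in> V1 c X V" using xvt Pr_in_V1_iff by blast
    then show "msmul Y (s ^ 1) (g1' (Pr x (Pr v (Sc s)))) = msmul Y (s ^ 1) (g1 (Pr x (Pr v (Sc s))))"
      using g_diff_eq g1'.g_diff_eq by (metis power_one_right val.sel(1))
  qed (use xvt W in auto)
qed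

lemma dq_eq_g1: "p \<in> V1 c X V \<Longrightarrow> dq c X Y V g p = g1 p"
  unfolding dq_def using dq_unique someI[of "is_dq c X Y V g", OF is_dq_g1] by blast

lemma dd_eq: "x \<in> V \<Longrightarrow> v \<in> mcar X \<Longrightarrow> dd c X Y V g x v = g1 (Pr x (Pr v (Sc 0)))"
  unfolding dd_def using dq_eq_g1 zero_in_line_params_V Pr_in_V1_iff by blast

lemma g1_add_direction:
  assumes x: "x \<in> V" and v: "v \<in> mcar X" and w: "w \<in> mcar X"
  shows "g1 (Pr x (Pr (madd X v w) (Sc 0))) = madd Y (g1 (Pr x (Pr w (Sc 0)))) (g1 (Pr x (Pr v (Sc 0))))"
proof -
  have vw: "madd X v w \<in> mcar X" using v w by simp
  have x': "x \<in> mcar X" using x V_subset by blast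
  define W where "W = line_params X V x v \<inter> line_params X V x (madd X v w)"
  have W: "openin (mtop K) W" "W \<subseteq> range Sc"
    using openin_line_params_V[OF x v] openin_line_params_V[OF x vw]
    by (auto simp: W_def line_params_def simp del: Kmod_simps)
  have W_sub: "W \<subseteq> line_params X V x v" "W \<subseteq> line_params X V x (madd X v w)"
    by (auto simp: W_def)
  have moved: "Pr (madd X x (msmul X (unSc t) v)) (Pr w t) \<in> V1 c X V" if "t \<in> W" for t
    using that w dom.add_smul_add_smul[OF x' v w] by (auto simp: W_def line_params_def)
  have "C K (X3 c X) W (\<lambda>t. Pr (madd X x (msmul X (unSc t) v)) (Pr w t))"
    unfolding X3_def
    by (intro C0_Pr C0_line_on C0_const C0_ident Kmod_in_Mods) (use x' v w W X_in_Mods in auto)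
  from C0_compose[OF this C0_g1 moved]
  have sum_C0: "C K Y W (\<lambda>t. madd Y (g1 (Pr (madd X x (msmul X (unSc t) v)) (Pr w t))) (g1 (Pr x (Pr v t))))"
    by (rule C0_madd[OF _ C0_g1_line[OF x v W(1) W_sub(1)]])
  have "g1 (Pr x (Pr (madd X v w) t)) =
      madd Y (g1 (Pr (madd X x (msmul X (unSc t) v)) (Pr w t))) (g1 (Pr x (Pr v t)))" if "t \<in> W" for t
  proof (rule C0_eq_by_units[OF C0_g1_line[OF x vw W(1) W_sub(2)] sum_C0 that, where n = 1])
    fix s assume s: "Sc s \<in> W"
    have in_V1: "Pr x (Pr (madd X v w) (Sc s)) \<in> V1 c X V" "Pr x (Pr v (Sc s)) \<in> V1 c X V"
      using s x v vw by (auto simp: W_def line_params_def)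
    have "msmul Y s (g1 (Pr x (Pr (madd X v w) (Sc s)))) =
        madd Y (msub Y (g (madd X x (msmul X s (madd X v w)))) (g (madd X x (msmul X s v))))
          (msub Y (g (madd X x (msmul X s v))) (g x))"
      using g_diff_eq[OF in_V1(1)] in_V1 C0_in_mcar[OF C0_g] x
      by (simp add: cod.sub_add_sub)
    also have "\<dots> = msmul Y s (madd Y (g1 (Pr (madd X x (msmul X s v)) (Pr w (Sc s)))) (g1 (Pr x (Pr v (Sc s)))))"
      using g_diff_eq[OF moved[OF s]] g_diff_eq[OF in_V1(2)] moved[OF s] in_V1
        dom.add_smul_add_smul[OF x' v w] by (simp add: cod.smul_add_right g1_in_mcar)
    finally show "msmul Y (s ^ 1) (g1 (Pr x (Pr (madd X v w) (Sc s)))) =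
        msmul Y (s ^ 1) (madd Y (g1 (Pr (madd X x (msmul X (unSc (Sc s)) v)) (Pr w (Sc s))))
          (g1 (Pr x (Pr v (Sc s)))))" by simp
  qed
  moreover have "Sc 0 \<in> W" using zero_in_line_params_V x v vw by (simp add: W_def)
  ultimately show ?thesis using x' v by simp
qed

lemma g1_smul_direction:
  assumes x: "x \<in> V" and v: "v \<in> mcar X"
  shows "g1 (Pr x (Pr (msmul X r v) (Sc 0))) = msmul Y r (g1 (Pr x (Pr v (Sc 0))))"
proof -
  have rv: "msmul X r v \<in> mcar X" using v by simp
  define W where "W = line_params X V x (msmul X r v)"
  have W: "openin (mtop K) W" "W \<subseteq> range Sc"
    unfolding W_def by (rule openin_line_params_V[OF x rv], rule line_params_subset)
  have scaled: "Sc (r * unSc t) \<in> line_params X V x v" if "t \<in> W" for t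
    using that v by (auto simp: W_def line_params_def mult.commute)
  have "C K Y W (\<lambda>t. g1 (Pr x (Pr v (Sc (r * unSc t)))))"
    using C0_compose[OF C0_restrict[OF C0_K_scale W(1)] C0_g1_line[OF x v openin_line_params_V[OF x v] order_refl]]
      W(2) scaled by auto
  then have scaled_C0: "C K Y W (\<lambda>t. msmul Y r (g1 (Pr x (Pr v (Sc (r * unSc t))))))"
    by (rule C0_msmul)
  have "g1 (Pr x (Pr (msmul X r v) t)) = msmul Y r (g1 (Pr x (Pr v (Sc (r * unSc t)))))"
    if "t \<in> W" for t
  proof (rule C0_eq_by_units[OF C0_g1_line[OF x rv W(1)] scaled_C0 that, where n = 1])
    fix s assume s: "Sc s \<in> W"
    have in_V1: "Pr x (Pr (msmul X r v) (Sc s)) \<in> V1 c X V" "Pr x (Pr v (Sc (r * s))) \<in> V1 c X V"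
      using s x v scaled[OF s] by (auto simp: W_def line_params_def)
    show "msmul Y (s ^ 1) (g1 (Pr x (Pr (msmul X r v) (Sc s)))) =
        msmul Y (s ^ 1) (msmul Y r (g1 (Pr x (Pr v (Sc (r * unSc (Sc s)))))))"
      using g_diff_eq[OF in_V1(1)] g_diff_eq[OF in_V1(2)] in_V1 v
      by (simp add: g1_in_mcar mult.commute)
  qed (simp add: W_def)
  moreover have "Sc 0 \<in> W" using zero_in_line_params_V[OF x rv] by (simp add: W_def)
  ultimately show ?thesis by simp
qed

lemma linear_dd:
  assumes x: "x \<in> V"
  shows "is_linear_map X Y (dd c X Y V g x)"
  unfolding is_linear_map_def
proof (intro conjI ballI allI)
  have at_0: "Pr x (Pr v (Sc 0)) \<in> V1 c X V" if "v \<in> mcar X" for v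
    using Pr_in_V1_iff zero_in_line_params_V x that by blast
  fix v w assume "v \<in> mcar X" "w \<in> mcar X"
  then show "dd c X Y V g x (madd X v w) = madd Y (dd c X Y V g x v) (dd c X Y V g x w)"
    using x g1_add_direction cod.add_commute[OF g1_in_mcar[OF at_0] g1_in_mcar[OF at_0]]
    by (simp add: dd_eq)
next
  fix r v assume "v \<in> mcar X"
  then show "dd c X Y V g x (msmul X r v) = msmul Y r (dd c X Y V g x v)"
    using x g1_smul_direction by (simp add: dd_eq)
qed

lemma X3_translate:
  "h \<in> mcar X \<Longrightarrow> madd (X3 c X) (Pr x (Pr h (Sc t0))) (msmul (X3 c X) s (Pr v (Pr (mzero X) (Sc 0)))) =
    Pr (madd X x (msmul X s v)) (Pr h (Sc t0))"
  by (simp add: X3_def)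

end

locale c2_map = c1_map +
  fixes g2
  assumes is_dq_g2: "is_dq c (X3 c X) Y (V1 c X V) g1 g2"
begin

lemma C0_g2: "C (X3 c (X3 c X)) Y (V1 c (X3 c X) (V1 c X V)) g2"
  using is_dq_g2 unfolding is_dq_def by blast

lemma g1_diff_eq: "Pr p (Pr u t) \<in> V1 c (X3 c X) (V1 c X V) \<Longrightarrow>
    msub Y (g1 (madd (X3 c X) p (msmul (X3 c X) (unSc t) u))) (g1 p) = msmul Y (unSc t) (g2 (Pr p (Pr u t)))"
  using is_dq_g2 unfolding is_dq_def by blast

text \<open>Since \<open>(y, w, 0) + t (v, 0, 0) = (y + t v, w, 0)\<close>, the second difference quotient \<open>g2\<close>
  at \<open>((y, w, 0), (v, 0, 0), t)\<close> is a difference quotient of \<open>y \<mapsto> g1 (y, w, 0) = dg(y) w\<close>.\<close>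
definition partial_dq where
  "partial_dq w q =
     g2 (Pr (Pr (vfst q) (Pr w (Sc 0))) (Pr (Pr (vfst (vsnd q)) (Pr (mzero X) (Sc 0))) (vsnd (vsnd q))))"

lemma C0_partial_dq:
  assumes w: "w \<in> mcar X"
  shows "C (X3 c X) Y (V1 c X V) (partial_dq w)"
proof -
  let ?XK = "P X K" and ?V1 = "V1 c X V"
  have XK: "?XK \<in> Mods c" using X_in_Mods by simp
  have V1: "openin (mtop (P X ?XK)) ?V1" "?V1 \<subseteq> mcar (P X ?XK)"
    using C0D(3)[OF C0_g1] C0_subset_mcar[OF C0_g1] unfolding X3_def by auto
  have fst: "C (P X ?XK) X ?V1 vfst" and snd: "C (P X ?XK) ?XK ?V1 vsnd"
    using C0_restrict[OF C0_fst[OF X_in_Mods XK] V1] C0_restrict[OF C0_snd[OF X_in_Mods XK] V1] .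
  have snd_fst: "C (P X ?XK) X ?V1 (\<lambda>q. vfst (vsnd q))" and snd_snd: "C (P X ?XK) K ?V1 (\<lambda>q. vsnd (vsnd q))"
    using C0_compose[OF snd C0_fst[OF X_in_Mods Kmod_in_Mods]] C0_compose[OF snd C0_snd[OF X_in_Mods Kmod_in_Mods]]
      C0_in_mcar[OF snd] by auto
  have const: "C (P X ?XK) ?XK ?V1 (\<lambda>_. Pr h (Sc 0))" if "h \<in> mcar X" for h
    using C0_const[OF C0D(1)[OF fst] XK V1(1)] that by simp
  have "C (P X ?XK) (X3 c (X3 c X)) ?V1
      (\<lambda>q. Pr (Pr (vfst q) (Pr w (Sc 0))) (Pr (Pr (vfst (vsnd q)) (Pr (mzero X) (Sc 0))) (vsnd (vsnd q))))"
    unfolding X3_def by (intro const C0_Pr fst snd_fst snd_snd w dom.zero_closed)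
  moreover have "Pr (Pr (vfst q) (Pr w (Sc 0))) (Pr (Pr (vfst (vsnd q)) (Pr (mzero X) (Sc 0))) (vsnd (vsnd q)))
      \<in> V1 c (X3 c X) ?V1" if "q \<in> ?V1" for q
    using that w V_subset by (auto simp: V1_def X3_def)
  ultimately have "C (P X ?XK) Y ?V1
      (\<lambda>q. g2 (Pr (Pr (vfst q) (Pr w (Sc 0))) (Pr (Pr (vfst (vsnd q)) (Pr (mzero X) (Sc 0))) (vsnd (vsnd q)))))"
    by (rule C0_compose[OF _ C0_g2])
  then show ?thesis unfolding partial_dq_def[abs_def] X3_def .
qed

lemma c1_map_partial:
  assumes w: "w \<in> mcar X"
  shows "c1_map c X Y V (\<lambda>y. dd c X Y V g y w) (partial_dq w)"
proof (intro c1_map.intro c1_map_axioms.intro)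
  have "C X (X3 c X) V (\<lambda>y. Pr y (Pr w (Sc 0)))"
    unfolding X3_def using w by (intro C0_Pr C0_ident C0_const X_in_Mods open_V) simp_all
  from C0_compose[OF this C0_g1] show "C X Y V (\<lambda>y. dd c X Y V g y w)"
    by (rule C0_cong) (use w dd_eq zero_in_line_params_V V_subset in auto)
  show "is_dq c X Y V (\<lambda>y. dd c X Y V g y w) (partial_dq w)"
    unfolding is_dq_def
  proof (intro conjI C0_partial_dq[OF w] allI impI)
    fix y v t assume q: "Pr y (Pr v t) \<in> V1 c X V"
    then have y: "y \<in> V" "madd X y (msmul X (unSc t) v) \<in> V" by auto
    have "Pr (Pr y (Pr w (Sc 0))) (Pr (Pr v (Pr (mzero X) (Sc 0))) t) \<in> V1 c (X3 c X) (V1 c X V)"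
      using q w V_subset by (auto simp: X3_def)
    from g1_diff_eq[OF this]
    show "msub Y (dd c X Y V g (madd X y (msmul X (unSc t) v)) w) (dd c X Y V g y w) =
        msmul Y (unSc t) (partial_dq w (Pr y (Pr v t)))"
      using X3_translate[OF w, of y 0 "unSc t" v] dd_eq[OF y(1) w] dd_eq[OF y(2) w]
      by (simp add: partial_dq_def)
  qed
qed unfold_locales

lemma g2_second_difference:
  assumes x: "x \<in> V" and h1: "h1 \<in> mcar X" and h2: "h2 \<in> mcar X"
    and moved: "madd X x (msmul X s h1) \<in> V" "madd X x (msmul X s h2) \<in> V"
      "madd X x (msmul X s (madd X h1 h2)) \<in> V"
  shows "msmul Y (s * s) (g2 (Pr (Pr x (Pr h2 (Sc s))) (Pr (Pr h1 (Pr (mzero X) (Sc 0))) (Sc s)))) =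
    msub Y (msub Y (g (madd X x (msmul X s (madd X h1 h2)))) (g (madd X x (msmul X s h1))))
      (msub Y (g (madd X x (msmul X s h2))) (g x))"
proof -
  define p where "p = Pr x (Pr h2 (Sc s))"
  define p' where "p' = Pr (madd X x (msmul X s h1)) (Pr h2 (Sc s))"
  define u where "u = Pr h1 (Pr (mzero X) (Sc 0))"
  have x': "x \<in> mcar X" using x V_subset by blast
  have p: "p \<in> V1 c X V" "p' \<in> V1 c X V"
    using x moved h2 dom.add_smul_add_smul[OF x' h1 h2] by (auto simp: p_def p'_def)
  have pu: "Pr p (Pr u (Sc s)) \<in> V1 c (X3 c X) (V1 c X V)" and p_u: "madd (X3 c X) p (msmul (X3 c X) s u) = p'"
    using p h1 h2 X3_translate[OF h2, of x s s h1] by (auto simp: p_def p'_def u_def X3_def)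
  have "msmul Y (s * s) (g2 (Pr p (Pr u (Sc s)))) = msmul Y s (msub Y (g1 p') (g1 p))"
    using g1_diff_eq[OF pu] p_u C0_in_mcar[OF C0_g2 pu] by simp
  also have "\<dots> = msub Y (msmul Y s (g1 p')) (msmul Y s (g1 p))"
    using p by (simp add: cod.smul_sub g1_in_mcar)
  also have "\<dots> = msub Y (msub Y (g (madd X x (msmul X s (madd X h1 h2)))) (g (madd X x (msmul X s h1))))
      (msub Y (g (madd X x (msmul X s h2))) (g x))"
    using g_diff_eq[OF p(1)[unfolded p_def]] g_diff_eq[OF p(2)[unfolded p'_def]]
      dom.add_smul_add_smul[OF x' h1 h2] by (simp add: p_def p'_def)
  finally show ?thesis by (simp add: p_def u_def)
qed

lemma C0_g2_curve:
  assumes x: "x \<in> V" and h1: "h1 \<in> mcar X" and h2: "h2 \<in> mcar X"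
  shows "C K Y (line_params X V x h1 \<inter> line_params X V x h2 \<inter> line_params X V x (madd X h1 h2))
    (\<lambda>t. g2 (Pr (Pr x (Pr h2 t)) (Pr (Pr h1 (Pr (mzero X) (Sc 0))) t)))"
proof -
  let ?W = "line_params X V x h1 \<inter> line_params X V x h2 \<inter> line_params X V x (madd X h1 h2)"
  have x': "x \<in> mcar X" using x V_subset by blast
  have W: "openin (mtop K) ?W"
    using h1 h2 by (intro openin_Int openin_line_params_V x) simp_all
  have "C K (X3 c (X3 c X)) ?W (\<lambda>t. Pr (Pr x (Pr h2 t)) (Pr (Pr h1 (Pr (mzero X) (Sc 0))) t))"
    unfolding X3_def[of c "X3 c X"] using C0D(1)[OF C0_g1] h1
    by (intro C0_Pr C0_Pr_curve C0_const C0_ident X_in_Mods x' h2 W Kmod_in_Mods) (simp_all add: X3_def)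
  moreover have "Pr (Pr x (Pr h2 t)) (Pr (Pr h1 (Pr (mzero X) (Sc 0))) t) \<in> V1 c (X3 c X) (V1 c X V)"
    if "t \<in> ?W" for t
    using that x h1 h2 dom.add_smul_add_smul[OF x' h1 h2] X3_translate[OF h2]
    by (auto simp: line_params_def X3_def)
  ultimately show ?thesis by (rule C0_compose[OF _ C0_g2])
qed

lemma dd2_eq:
  assumes "x \<in> V" "v \<in> mcar X" "w \<in> mcar X"
  shows "dd2 c X Y V g x v w = g2 (Pr (Pr x (Pr w (Sc 0))) (Pr (Pr v (Pr (mzero X) (Sc 0))) (Sc 0)))"
  unfolding dd2_def using c1_map.dd_eq[OF c1_map_partial[OF assms(3)] assms(1,2)]
  by (simp add: partial_dq_def)

lemma linear_dd2_left: "x \<in> V \<Longrightarrow> w \<in> mcar X \<Longrightarrow> is_linear_map X Y (\<lambda>v. dd2 c X Y V g x v w)"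
  unfolding dd2_def using c1_map.linear_dd[OF c1_map_partial] by blast

end

lemma Ck_imp_C0: "Ck c k X Y V g \<Longrightarrow> C0 c X Y V g"
  unfolding Ck_def by (metis itdom.simps(1) itsp.simps(1) le0)

lemma (in c0_concept) c2_map_from_Ck:
  assumes "Ck c k X Y V g" "2 \<le> k"
  obtains g1 g2 where "c2_map c X Y V g g1 g2"
proof -
  obtain G where G: "G 0 = g" "\<forall>j\<le>k. C (itsp c j X) Y (itdom c j X V) (G j)"
    "\<forall>j<k. is_dq c (itsp c j X) Y (itdom c j X V) (G j) (G (Suc j))"
    using assms(1) unfolding Ck_def by blast
  have "c2_map c X Y V g (G 1) (G 2)"
  proof (intro c2_map.intro c1_map.intro c1_map_axioms.intro c2_map_axioms.intro)
    show "c0_concept c" by (rule c0_concept_axioms)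
    show "C X Y V g" using G(1,2) by force
    show "is_dq c X Y V g (G 1)" using G(1,3) assms(2) by force
    show "is_dq c (X3 c X) Y (V1 c X V) (G 1) (G 2)"
      using G(3)[rule_format, of 1] assms(2) by (simp add: numeral_2_eq_2)
  qed
  then show ?thesis by (rule that)
qed

section \<open>The expansion of order two\<close>

locale taylor_expansion = c2_map c E F U f f1 f2 for c E F U f f1 f2 +
  fixes k :: nat and a and R
  assumes two_le_k: "2 \<le> k"
    and C0_a: "\<And>j. j \<le> k \<Longrightarrow> C (P E E) F (pset U (mcar E)) (a j)"
    and C0_R: "C (X3 c E) F (V1 c E U) R"
    and R_zero: "\<And>x h. x \<in> U \<Longrightarrow> h \<in> mcar E \<Longrightarrow> R (Pr x (Pr h (Sc 0))) = mzero F"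
    and expansion: "\<And>x h t. Pr x (Pr h t) \<in> V1 c E U \<Longrightarrow>
      f (madd E x (msmul E (unSc t) h)) =
      madd F (msumn F (Suc k) (\<lambda>j. msmul F (unSc t ^ j) (a j (Pr x h))))
        (msmul F (unSc t ^ k) (R (Pr x (Pr h t))))"
begin

lemma a_in_mcar [simp]: "j \<le> k \<Longrightarrow> x \<in> U \<Longrightarrow> h \<in> mcar E \<Longrightarrow> a j (Pr x h) \<in> mcar F"
  using C0_in_mcar[OF C0_a] by simp

lemma f_in_mcar [simp]: "x \<in> U \<Longrightarrow> f x \<in> mcar F"
  using C0_in_mcar[OF C0_g] .

text \<open>\<open>f(x + t h) = a\<^sub>0 + t a\<^sub>1 + \<dots> + t\<^sup>m\<^sup>-\<^sup>1 a\<^sub>m\<^sub>-\<^sub>1 + t\<^sup>m tail m x h t\<close>\<close>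
definition tail where
  "tail m x h t = madd F (msumn F (Suc k - m) (\<lambda>j. msmul F (unSc t ^ j) (a (j + m) (Pr x h))))
      (msmul F (unSc t ^ (k - m)) (R (Pr x (Pr h t))))"

lemma tail_in_mcar [simp]: "m \<le> k \<Longrightarrow> Pr x (Pr h t) \<in> V1 c E U \<Longrightarrow> tail m x h t \<in> mcar F"
  unfolding tail_def using C0_in_mcar[OF C0_R] by (auto intro!: cod.msumn_closed)

lemma f_eq_tail_0: "Pr x (Pr h t) \<in> V1 c E U \<Longrightarrow> f (madd E x (msmul E (unSc t) h)) = tail 0 x h t"
  using expansion by (simp add: tail_def)

lemma tail_Suc:
  assumes m: "m < k" and V1: "Pr x (Pr h t) \<in> V1 c E U"
  shows "tail m x h t = madd F (a m (Pr x h)) (msmul F (unSc t) (tail (Suc m) x h t))"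
proof -
  have x: "x \<in> U" and h: "h \<in> mcar E" using V1 by auto
  have R: "R (Pr x (Pr h t)) \<in> mcar F" using C0_in_mcar[OF C0_R V1] .
  define b where "b m j = msmul F (unSc t ^ j) (a (j + m) (Pr x h))" for m j
  have b: "b m' j \<in> mcar F" if "j + m' \<le> k" for m' j using that x h by (simp add: b_def)
  have "msumn F (Suc k - m) (b m) = madd F (b m 0) (msumn F (k - m) (\<lambda>j. b m (Suc j)))"
    using cod.msumn_Suc_shift[of "k - m" "b m"] b m by (simp add: Suc_diff_le)
  also have "msumn F (k - m) (\<lambda>j. b m (Suc j)) = msumn F (k - m) (\<lambda>j. msmul F (unSc t) (b (Suc m) j))"
  proof (rule msumn_cong)
    fix j assume "j < k - m"
    then have "Suc (j + m) \<le> k" by simp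
    then show "b m (Suc j) = msmul F (unSc t) (b (Suc m) j)" using x h by (simp add: b_def)
  qed
  also have "\<dots> = msmul F (unSc t) (msumn F (Suc k - Suc m) (b (Suc m)))"
    using b by (simp add: cod.smul_msumn)
  finally have sum: "msumn F (Suc k - m) (b m) =
      madd F (a m (Pr x h)) (msmul F (unSc t) (msumn F (Suc k - Suc m) (b (Suc m))))"
    using x h less_imp_le[OF m] by (simp add: b_def[abs_def])
  have pow: "unSc t ^ (k - m) = unSc t * unSc t ^ (k - Suc m)"
    using m by (simp flip: power_Suc add: Suc_diff_Suc)
  show ?thesis
    using sum m x h R b unfolding tail_def b_def[symmetric] pow
    by (simp add: cod.add_assoc cod.smul_add_right)
qed

lemma tail_at_0: "m \<le> k \<Longrightarrow> x \<in> U \<Longrightarrow> h \<in> mcar E \<Longrightarrow> tail m x h (Sc 0) = a m (Pr x h)"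
proof (cases "m = k")
  case True
  assume "x \<in> U" "h \<in> mcar E"
  then show ?thesis using True R_zero by (simp add: tail_def)
next
  case False
  assume "m \<le> k" "x \<in> U" "h \<in> mcar E"
  moreover have "Pr x (Pr h (Sc 0)) \<in> V1 c E U" using calculation V_subset by auto
  ultimately show ?thesis using False tail_Suc[of m x h "Sc 0"] by simp
qed

lemma C0_tail:
  assumes "m \<le> k" "x \<in> U" "h \<in> mcar E" "openin (mtop K) W" "W \<subseteq> line_params E U x h"
  shows "C K F W (tail m x h)"
proof -
  have "C K F W (\<lambda>t. msumn F (Suc k - m) (\<lambda>j. msmul F (unSc t ^ j) (a (j + m) (Pr x h))))"
    using assms Y_in_Mods by (intro C0_msumn C0_power_smul C0_const) auto
  moreover have "Pr x (Pr h t) \<in> V1 c E U" if "t \<in> W" for t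
    using that assms(2,3,5) Pr_in_V1_iff by blast
  then have "C K F W (\<lambda>t. R (Pr x (Pr h t)))"
    using C0_compose[OF C0_Pr_curve[OF X_in_Mods _ assms(3,4)] C0_R] assms(2) V_subset by blast
  ultimately show ?thesis unfolding tail_def[abs_def] by (intro C0_madd C0_power_smul)
qed

lemma a0_eq: "x \<in> U \<Longrightarrow> h \<in> mcar E \<Longrightarrow> a 0 (Pr x h) = f x"
  using f_eq_tail_0[of x h "Sc 0"] tail_at_0[of 0 x h] V_subset by auto

lemma a1_eq_f1:
  assumes x: "x \<in> U" and h: "h \<in> mcar E"
  shows "a 1 (Pr x h) = f1 (Pr x (Pr h (Sc 0)))"
proof -
  let ?W = "line_params E U x h"
  have W: "openin (mtop K) ?W" using openin_line_params_V[OF x h] .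
  have "f1 (Pr x (Pr h t)) = tail 1 x h t" if "t \<in> ?W" for t
  proof (rule C0_eq_by_units[OF C0_g1_line[OF x h W order_refl] C0_tail[OF _ x h W order_refl] that,
        where n = 1])
    fix s assume "Sc s \<in> ?W"
    then have V1: "Pr x (Pr h (Sc s)) \<in> V1 c E U" using x h Pr_in_V1_iff by blast
    have "msmul F s (f1 (Pr x (Pr h (Sc s)))) = msub F (tail 0 x h (Sc s)) (f x)"
      using g_diff_eq[OF V1] f_eq_tail_0[OF V1] by simp
    also have "\<dots> = msmul F s (tail 1 x h (Sc s))"
      using tail_Suc[OF _ V1, of 0] two_le_k V1 x h by (simp add: a0_eq)
    finally show "msmul F (s ^ 1) (f1 (Pr x (Pr h (Sc s)))) = msmul F (s ^ 1) (tail 1 x h (Sc s))"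
      by simp
  qed (use two_le_k in simp)
  then show ?thesis
    using tail_at_0[of 1 x h] zero_in_line_params_V[OF x h] two_le_k x h by simp
qed

lemma a1_eq_dd: "x \<in> U \<Longrightarrow> h \<in> mcar E \<Longrightarrow> a 1 (Pr x h) = dd c E F U f x h"
  using a1_eq_f1 dd_eq by metis

lemma linear_a1: "x \<in> U \<Longrightarrow> is_linear_map E F (\<lambda>h. a 1 (Pr x h))"
  using dom.is_linear_map_cong[OF linear_dd] a1_eq_dd by metis

lemma f_expansion_2:
  assumes V1: "Pr x (Pr h t) \<in> V1 c E U"
  shows "f (madd E x (msmul E (unSc t) h)) =
    madd F (f x) (madd F (msmul F (unSc t) (a 1 (Pr x h))) (msmul F (unSc t * unSc t) (tail 2 x h t)))"
proof -
  have x: "x \<in> U" and h: "h \<in> mcar E" using V1 by auto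
  show ?thesis
    using f_eq_tail_0[OF V1] tail_Suc[OF _ V1, of 0] tail_Suc[OF _ V1, of 1] two_le_k x h V1
    by (simp add: a0_eq numeral_2_eq_2 cod.smul_add_right)
qed

lemma tail_2_smul_direction:
  assumes V1: "Pr x (Pr (msmul E r h) (Sc s)) \<in> V1 c E U" "Pr x (Pr h (Sc (r * s))) \<in> V1 c E U"
  shows "msmul F (s ^ 2) (tail 2 x (msmul E r h) (Sc s)) =
    msmul F (s ^ 2) (msmul F (r ^ 2) (tail 2 x h (Sc (r * s))))"
proof -
  have x: "x \<in> U" and h: "h \<in> mcar E" using V1 by auto
  define A where "A = tail 2 x (msmul E r h) (Sc s)"
  define B where "B = tail 2 x h (Sc (r * s))"
  define L where "L = a 1 (Pr x h)"
  have AB: "A \<in> mcar F" "B \<in> mcar F" "L \<in> mcar F"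
    using V1 two_le_k x h by (simp_all add: A_def B_def L_def)
  have "a 1 (Pr x (msmul E r h)) = msmul F r L"
    using linear_a1[OF x] h unfolding is_linear_map_def L_def by blast
  moreover have "madd E x (msmul E s (msmul E r h)) = madd E x (msmul E (r * s) h)"
    using h by (simp add: mult.commute)
  ultimately have "madd F (f x) (madd F (msmul F (s * r) L) (msmul F (s * s) A)) =
      madd F (f x) (madd F (msmul F (r * s) L) (msmul F (r * s * (r * s)) B))"
    using f_expansion_2[OF V1(1)] f_expansion_2[OF V1(2)] AB by (simp add: A_def B_def L_def)
  then have "madd F (msmul F (s * r) L) (msmul F (s * s) A) =
      madd F (msmul F (r * s) L) (msmul F (r * s * (r * s)) B)"
    by (rule cod.add_left_cancel[rotated 3]) (use AB x in simp_all)
  then have "madd F (msmul F (r * s) L) (msmul F (s * s) A) =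
      madd F (msmul F (r * s) L) (msmul F (r * s * (r * s)) B)"
    by (simp only: mult.commute[of s r])
  then have "msmul F (s * s) A = msmul F (r * s * (r * s)) B"
    by (rule cod.add_left_cancel[rotated 3]) (use AB in simp_all)
  then show ?thesis using AB by (simp add: A_def B_def power2_eq_square mult_ac)
qed

lemma a2_homogeneous:
  assumes x: "x \<in> U" and h: "h \<in> mcar E"
  shows "a 2 (Pr x (msmul E r h)) = msmul F (r ^ 2) (a 2 (Pr x h))"
proof -
  have rh: "msmul E r h \<in> mcar E" using h by simp
  define W where "W = line_params E U x (msmul E r h)"
  have W: "openin (mtop K) W" "W \<subseteq> range Sc"
    unfolding W_def by (rule openin_line_params_V[OF x rh], rule line_params_subset)
  have scaled: "Sc (r * unSc t) \<in> line_params E U x h" if "t \<in> W" for t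
    using that h by (auto simp: W_def line_params_def mult.commute)
  have "C K F W (\<lambda>t. tail 2 x h (Sc (r * unSc t)))"
    using C0_compose[OF C0_restrict[OF C0_K_scale W(1)] C0_tail[OF two_le_k x h openin_line_params_V[OF x h] order_refl]]
      W(2) scaled by auto
  then have scaled_C0: "C K F W (\<lambda>t. msmul F (r ^ 2) (tail 2 x h (Sc (r * unSc t))))"
    by (rule C0_msmul)
  have "tail 2 x (msmul E r h) t = msmul F (r ^ 2) (tail 2 x h (Sc (r * unSc t)))" if "t \<in> W" for t
  proof (rule C0_eq_by_units[OF C0_tail[OF two_le_k x rh W(1)] scaled_C0 that, where n = 2])
    fix s assume s: "Sc s \<in> W"
    show "msmul F (s ^ 2) (tail 2 x (msmul E r h) (Sc s)) =
        msmul F (s ^ 2) (msmul F (r ^ 2) (tail 2 x h (Sc (r * unSc (Sc s)))))"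
      using tail_2_smul_direction s scaled[OF s] x h by (auto simp: W_def line_params_def)
  qed (simp add: W_def)
  from this[of "Sc 0"] have "tail 2 x (msmul E r h) (Sc 0) = msmul F (r ^ 2) (tail 2 x h (Sc 0))"
    using zero_in_line_params_V[OF x rh] by (simp add: W_def)
  then show ?thesis using tail_at_0[OF two_le_k] x h rh by simp
qed

lemma tail_2_second_difference:
  assumes V1: "Pr x (Pr h1 (Sc s)) \<in> V1 c E U" "Pr x (Pr h2 (Sc s)) \<in> V1 c E U"
      "Pr x (Pr (madd E h1 h2) (Sc s)) \<in> V1 c E U"
  shows "msmul F (s ^ 2) (f2 (Pr (Pr x (Pr h2 (Sc s))) (Pr (Pr h1 (Pr (mzero E) (Sc 0))) (Sc s)))) =
    msmul F (s ^ 2) (msub F (msub F (tail 2 x (madd E h1 h2) (Sc s)) (tail 2 x h1 (Sc s))) (tail 2 x h2 (Sc s)))"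
proof -
  have x: "x \<in> U" and h1: "h1 \<in> mcar E" and h2: "h2 \<in> mcar E" using V1 by auto
  define b1 where "b1 = msmul F s (a 1 (Pr x h1))"
  define b2 where "b2 = msmul F s (a 1 (Pr x h2))"
  define T where "T h = msmul F (s * s) (tail 2 x h (Sc s))" for h
  have in_mcar: "b1 \<in> mcar F" "b2 \<in> mcar F" "T (madd E h1 h2) \<in> mcar F" "T h1 \<in> mcar F" "T h2 \<in> mcar F"
    using x h1 h2 two_le_k V1 by (simp_all add: b1_def b2_def T_def)
  have "a 1 (Pr x (madd E h1 h2)) = madd F (a 1 (Pr x h1)) (a 1 (Pr x h2))"
    using linear_a1[OF x] h1 h2 unfolding is_linear_map_def by blast
  then have f12: "f (madd E x (msmul E s (madd E h1 h2))) = madd F (f x) (madd F (madd F b1 b2) (T (madd E h1 h2)))"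
    using f_expansion_2[OF V1(3)] x h1 h2 two_le_k by (simp add: b1_def b2_def T_def cod.smul_add_right)
  have f1: "f (madd E x (msmul E s h1)) = madd F (f x) (madd F b1 (T h1))"
    and f2: "f (madd E x (msmul E s h2)) = madd F (f x) (madd F b2 (T h2))"
    using f_expansion_2[OF V1(1)] f_expansion_2[OF V1(2)] by (simp_all add: b1_def b2_def T_def)
  have "msmul F (s ^ 2) (f2 (Pr (Pr x (Pr h2 (Sc s))) (Pr (Pr h1 (Pr (mzero E) (Sc 0))) (Sc s)))) =
      msub F (msub F (f (madd E x (msmul E s (madd E h1 h2)))) (f (madd E x (msmul E s h1))))
        (msub F (f (madd E x (msmul E s h2))) (f x))"
    using g2_second_difference[OF x h1 h2] V1 by (simp add: power2_eq_square)
  also have "\<dots> = msub F (msub F (T (madd E h1 h2)) (T h1)) (T h2)"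
    unfolding f12 f1 f2 by (rule cod.second_difference_cancel[OF f_in_mcar[OF x] in_mcar])
  also have "\<dots> = msmul F (s ^ 2)
      (msub F (msub F (tail 2 x (madd E h1 h2) (Sc s)) (tail 2 x h1 (Sc s))) (tail 2 x h2 (Sc s)))"
    using V1 two_le_k by (simp add: T_def cod.smul_sub power2_eq_square)
  finally show ?thesis .
qed

lemma a2_polarization_f2:
  assumes x: "x \<in> U" and h1: "h1 \<in> mcar E" and h2: "h2 \<in> mcar E"
  shows "msub F (msub F (a 2 (Pr x (madd E h1 h2))) (a 2 (Pr x h1))) (a 2 (Pr x h2)) =
    f2 (Pr (Pr x (Pr h2 (Sc 0))) (Pr (Pr h1 (Pr (mzero E) (Sc 0))) (Sc 0)))"
proof -
  define h12 where "h12 = madd E h1 h2"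
  have h12: "h12 \<in> mcar E" using h1 h2 by (simp add: h12_def)
  define W where "W = line_params E U x h1 \<inter> line_params E U x h2 \<inter> line_params E U x h12"
  have W: "openin (mtop K) W"
    unfolding W_def by (intro openin_Int openin_line_params_V x h1 h2 h12)
  have f2_C0: "C K F W (\<lambda>t. f2 (Pr (Pr x (Pr h2 t)) (Pr (Pr h1 (Pr (mzero E) (Sc 0))) t)))"
    using C0_g2_curve[OF x h1 h2] by (simp add: W_def h12_def)
  have tails_C0: "C K F W (\<lambda>t. msub F (msub F (tail 2 x h12 t) (tail 2 x h1 t)) (tail 2 x h2 t))"
    by (intro C0_msub C0_tail two_le_k x h1 h2 h12 W) (auto simp: W_def)
  have "f2 (Pr (Pr x (Pr h2 t)) (Pr (Pr h1 (Pr (mzero E) (Sc 0))) t)) =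
      msub F (msub F (tail 2 x h12 t) (tail 2 x h1 t)) (tail 2 x h2 t)" if "t \<in> W" for t
  proof (rule C0_eq_by_units[OF f2_C0 tails_C0 that, where n = 2])
    fix s assume "Sc s \<in> W"
    then show "msmul F (s ^ 2) (f2 (Pr (Pr x (Pr h2 (Sc s))) (Pr (Pr h1 (Pr (mzero E) (Sc 0))) (Sc s)))) =
        msmul F (s ^ 2) (msub F (msub F (tail 2 x h12 (Sc s)) (tail 2 x h1 (Sc s))) (tail 2 x h2 (Sc s)))"
      using tail_2_second_difference x h1 h2 h12 by (auto simp: W_def line_params_def h12_def)
  qed
  from this[of "Sc 0"] show ?thesis
    using zero_in_line_params_V x h1 h2 h12 tail_at_0[OF two_le_k]
    by (simp add: W_def h12_def)
qed

lemma a2_polarization: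
  "x \<in> U \<Longrightarrow> h1 \<in> mcar E \<Longrightarrow> h2 \<in> mcar E \<Longrightarrow>
    msub F (msub F (a 2 (Pr x (madd E h1 h2))) (a 2 (Pr x h1))) (a 2 (Pr x h2)) = dd2 c E F U f x h1 h2"
  by (simp add: a2_polarization_f2 dd2_eq)

lemma quadratic_form_a2:
  assumes x: "x \<in> U"
  shows "is_quadratic_form E F (\<lambda>h. a 2 (Pr x h))"
  unfolding is_quadratic_form_def is_bilinear_map_def
proof (intro conjI ballI allI)
  fix r h assume "h \<in> mcar E"
  then show "a 2 (Pr x (msmul E r h)) = msmul F (r ^ 2) (a 2 (Pr x h))"
    using a2_homogeneous x by blast
next
  fix h2 assume "h2 \<in> mcar E"
  then show "is_linear_map E F (\<lambda>h1. msub F (msub F (a 2 (Pr x (madd E h1 h2))) (a 2 (Pr x h1))) (a 2 (Pr x h2)))"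
    using dom.is_linear_map_cong[OF linear_dd2_left[OF x]] a2_polarization[OF x] by simp
next
  fix h1 assume h1: "h1 \<in> mcar E"
  have "msub F (msub F (a 2 (Pr x (madd E h1 h2))) (a 2 (Pr x h1))) (a 2 (Pr x h2)) =
      dd2 c E F U f x h2 h1" if h2: "h2 \<in> mcar E" for h2
    using a2_polarization[OF x h2 h1] cod.sub_sub_commute dom.add_commute[OF h1 h2] x h1 h2 two_le_k
    by simp
  then show "is_linear_map E F (\<lambda>h2. msub F (msub F (a 2 (Pr x (madd E h1 h2))) (a 2 (Pr x h1))) (a 2 (Pr x h2)))"
    using dom.is_linear_map_cong[OF linear_dd2_left[OF x h1]] by simp
qed

lemma twice_a2:
  assumes x: "x \<in> U" and h: "h \<in> mcar E"
  shows "msmul F 2 (a 2 (Pr x h)) = dd2 c E F U f x h h"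
proof -
  define q where "q = a 2 (Pr x h)"
  have q: "q \<in> mcar F" using x h two_le_k by (simp add: q_def)
  have "madd E h h = msmul E 2 h" using dom.smul_add_left[OF h, of 1 1] h by simp
  then have "dd2 c E F U f x h h = msub F (msub F (msmul F (2 ^ 2) q) q) q"
    using a2_polarization[OF x h h] a2_homogeneous[OF x h] by (simp add: q_def)
  also have "msmul F (2 ^ 2) q = madd F (madd F (msmul F 2 q) q) q"
    using cod.smul_add_left[OF q, of "2 + 1" 1] cod.smul_add_left[OF q, of 2 1] q by simp
  finally show ?thesis using q by (simp add: q_def)
qed

end

theorem proposition5p3:
  fixes c :: "('k::comm_ring_1, 'a) c0concept"
    and E F :: "('k, 'a) tmod"
    and U :: "('k, 'a) val set"
    and k :: nat
    and f :: "('k, 'a) val \<Rightarrow> ('k, 'a) val"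
    and a :: "nat \<Rightarrow> ('k, 'a) val \<Rightarrow> ('k, 'a) val"
    and R :: "('k, 'a) val \<Rightarrow> ('k, 'a) val"
  assumes concept: "is_C0_concept c"
    and EM: "E \<in> Mods c" and FM: "F \<in> Mods c"
    and Uopen: "openin (mtop E) U"
    and k2: "k \<ge> 2"
    and fCk: "Ck c k E F U f"
    and aC: "\<forall>j\<le>k. Ck c (k - j) (prodm c E E) F (pset U (mcar E)) (a j)"
    and RC: "C0 c (X3 c E) F (V1 c E U) R"
    and R0: "\<forall>x\<in>U. \<forall>h\<in>mcar E. R (Pr x (Pr h (Sc 0))) = mzero F"
    and expansion: "\<forall>x h t. Pr x (Pr h t) \<in> V1 c E U \<longrightarrow>
        f (madd E x (msmul E (unSc t) h)) =
        madd F (msumn F (Suc k) (\<lambda>j. msmul F (unSc t ^ j) (a j (Pr x h))))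
               (msmul F (unSc t ^ k) (R (Pr x (Pr h t))))"
  shows "\<forall>x\<in>U.
     (\<forall>h\<in>mcar E. a 0 (Pr x h) = f x) \<and>
     (\<forall>h\<in>mcar E. a 1 (Pr x h) = dd c E F U f x h) \<and>
     is_linear_map E F (\<lambda>h. a 1 (Pr x h)) \<and>
     is_quadratic_form E F (\<lambda>h. a 2 (Pr x h)) \<and>
     (\<forall>h1\<in>mcar E. \<forall>h2\<in>mcar E.
        msub F (msub F (a 2 (Pr x (madd E h1 h2))) (a 2 (Pr x h1))) (a 2 (Pr x h2))
          = dd2 c E F U f x h1 h2) \<and>
     (\<forall>h\<in>mcar E. msmul F 2 (a 2 (Pr x h)) = dd2 c E F U f x h h)"
proof -
  interpret c0_concept c using concept by (rule c0_concept.intro)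
  obtain f1 f2 where "c2_map c E F U f f1 f2" using c2_map_from_Ck[OF fCk k2] .
  then interpret taylor_expansion c E F U f f1 f2 k a R
  proof (intro taylor_expansion.intro taylor_expansion_axioms.intro)
    show "C (P E E) F (pset U (mcar E)) (a j)" if "j \<le> k" for j
      using aC Ck_imp_C0 that by blast
  qed (use k2 RC R0 expansion in simp_all)
  show ?thesis
    using a0_eq a1_eq_dd linear_a1 quadratic_form_a2 a2_polarization twice_a2 by blast
qed

end
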